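(* Let $L\in\mathbb{R}^{n\times n}$ be the Laplacian of an undirected unweighted graph on $n$ nodes, let $s \in \mathbb{R}^n$ be a mean-zero innate opinion vector and $z = (I+L)^{-1}s$. Let $u\neq v$ be two nodes not joined by an edge, let $E = \chi_{u,v}\chi_{u,v}^T$ be the edge Laplacian of $(u,v)$, and let $\delta = z(u)-z(v)$. Then $$PD(L) - \delta^2 \le PD(L+E) \le PD(L) - \frac{\delta^2}{3}.$$
   Context: $\chi_{u,v}\in\mathbb{R}^n$ is the vector with $1$ in coordinate $u$, $-1$ in coordinate $v$ and $0$ elsewhere. Friedkin–Johnsen model: expressed opinions $z=(I+L)^{-1}s$. With $s$ fixed, the polarization+disagreement of a graph with Laplacian $M$ is $PD(M) = s^T (I+M)^{-1} s$. *)

theory Defs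
  imports "HOL-Analysis.Analysis"
begin

definition undirected_graph :: "('n \<Rightarrow> 'n \<Rightarrow> bool) \<Rightarrow> bool" where
  "undirected_graph A \<longleftrightarrow> (\<forall>i j. A i j \<longleftrightarrow> A j i) \<and> (\<forall>i. \<not> A i i)"

definition graph_laplacian :: "('n::finite \<Rightarrow> 'n \<Rightarrow> bool) \<Rightarrow> real^'n^'n" where
  "graph_laplacian A = (\<chi> i j. if i = j then real (card {k. A i k})
                               else if A i j then -1 else 0)"

definition chi_vec :: "'n::finite \<Rightarrow> 'n \<Rightarrow> real^'n" where
  "chi_vec u v = (\<chi> i. if i = u then 1 else if i = v then -1 else 0)"

definition outer :: "real^'n \<Rightarrow> real^'n \<Rightarrow> real^'n^'n" where
  "outer x y = (\<chi> i j. x $ i * y $ j)"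

definition edge_laplacian :: "'n::finite \<Rightarrow> 'n \<Rightarrow> real^'n^'n" where
  "edge_laplacian u v = outer (chi_vec u v) (chi_vec u v)"

definition fj_opinions :: "real^'n^'n \<Rightarrow> real^'n \<Rightarrow> real^'n" where
  "fj_opinions L s = matrix_inv (mat 1 + L) *v s"

definition PD :: "real^'n \<Rightarrow> real^'n^'n \<Rightarrow> real" where
  "PD s M = s \<bullet> (matrix_inv (mat 1 + M) *v s)"

end

theory Submission
  imports Defs
begin

text \<open>Adding the edge \<open>(u,v)\<close> is the rank-one update \<open>I + L + c c\<^sup>T\<close> with \<open>c = \<chi>\<^sub>u\<^sub>,\<^sub>v\<close>, so by
Sherman--Morrison \<open>PD(L+E) = PD(L) - \<delta>\<^sup>2 / (1 + q)\<close> with \<open>q = c\<^sup>T (I+L)\<^sup>-\<^sup>1 c\<close>.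
Since \<open>I + L \<succeq> I\<close>, the quadratic form of its inverse lies between \<open>0\<close> and that of the identity,
so \<open>0 \<le> q \<le> \<parallel>c\<parallel>\<^sup>2 = 2\<close>, which gives both bounds.\<close>

lemma graph_laplacian_mult_vec:
  assumes "undirected_graph A"
  shows "(graph_laplacian A *v x) $ i = (\<Sum>j\<in>UNIV. if A i j then x $ i - x $ j else 0)"
proof -
  have no_loop: "\<not> A i i" using assms unfolding undirected_graph_def by blast
  have "(graph_laplacian A *v x) $ i
        = (\<Sum>j\<in>UNIV. (if j = i then real (card {k. A i k}) * x $ i else 0) - (if A i j then x $ j else 0))"
    using no_loop unfolding matrix_vector_mult_def graph_laplacian_def
    by (simp, intro sum.cong) auto
  also have "\<dots> = real (card {k. A i k}) * x $ i - (\<Sum>j\<in>UNIV. if A i j then x $ j else 0)"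
    by (simp add: sum_subtractf)
  also have "\<dots> = (\<Sum>j\<in>UNIV. if A i j then x $ i - x $ j else 0)"
    by (simp add: sum.If_cases sum_subtractf)
  finally show ?thesis .
qed

lemma graph_laplacian_quadratic_form:
  assumes "undirected_graph A"
  shows "2 * (x \<bullet> (graph_laplacian A *v x)) = (\<Sum>i\<in>UNIV. \<Sum>j\<in>UNIV. if A i j then (x $ i - x $ j)\<^sup>2 else 0)"
proof -
  have sym: "A i j \<longleftrightarrow> A j i" for i j using assms unfolding undirected_graph_def by blast
  define S where "S = (\<Sum>i\<in>UNIV. \<Sum>j\<in>UNIV. if A i j then x $ i * (x $ i - x $ j) else 0)"
  have form: "x \<bullet> (graph_laplacian A *v x) = S"
    unfolding S_def inner_vec_def graph_laplacian_mult_vec[OF assms]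
    by (simp add: sum_distrib_left if_distrib cong: if_cong)
  have "S = (\<Sum>i\<in>UNIV. \<Sum>j\<in>UNIV. if A i j then x $ j * (x $ j - x $ i) else 0)"
    unfolding S_def by (subst sum.swap) (simp add: sym cong: if_cong)
  then have "2 * S = (\<Sum>i\<in>UNIV. \<Sum>j\<in>UNIV.
               (if A i j then x $ i * (x $ i - x $ j) else 0) + (if A i j then x $ j * (x $ j - x $ i) else 0))"
    by (simp add: S_def sum.distrib)
  also have "\<dots> = (\<Sum>i\<in>UNIV. \<Sum>j\<in>UNIV. if A i j then (x $ i - x $ j)\<^sup>2 else 0)"
    by (intro sum.cong refl) (auto simp: power2_eq_square algebra_simps)
  finally show ?thesis using form by simp
qed

lemma graph_laplacian_psd:
  assumes "undirected_graph A"
  shows "0 \<le> x \<bullet> (graph_laplacian A *v x)"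
proof -
  have "0 \<le> (\<Sum>i\<in>UNIV. \<Sum>j\<in>UNIV. if A i j then (x $ i - x $ j)\<^sup>2 else 0)"
    by (intro sum_nonneg) auto
  then show ?thesis using graph_laplacian_quadratic_form[OF assms, of x] by simp
qed

lemma transpose_graph_laplacian:
  assumes "undirected_graph A"
  shows "transpose (graph_laplacian A) = graph_laplacian A"
  using assms by (auto simp: vec_eq_iff transpose_def graph_laplacian_def undirected_graph_def)

lemma invertible_if_ge_identity:
  fixes M :: "real^'n::finite^'n"
  assumes "\<And>x. x \<bullet> x \<le> x \<bullet> (M *v x)"
  shows "invertible M"
  unfolding invertible_left_inverse matrix_left_invertible_ker
proof (intro allI impI)
  fix x assume "M *v x = 0"
  then have "x \<bullet> x \<le> 0" using assms[of x] by simp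
  then show "x = 0" by (metis inner_gt_zero_iff not_le)
qed

lemma matrix_inv_mult_vec_right:
  fixes M :: "real^'n::finite^'n"
  assumes "invertible M"
  shows "M *v (matrix_inv M *v y) = y"
proof -
  have "M ** matrix_inv M = mat 1 \<and> matrix_inv M ** M = mat 1"
    using assms unfolding invertible_def matrix_inv_def by (rule someI_ex)
  then show ?thesis by (simp add: matrix_vector_mul_assoc)
qed

lemma inner_symmetric_matrix:
  fixes M :: "real^'n::finite^'n"
  assumes "transpose M = M"
  shows "(M *v a) \<bullet> b = a \<bullet> (M *v b)"
  by (metis assms dot_lmul_matrix transpose_matrix_vector)

lemma outer_mult_vec: "outer a b *v x = (b \<bullet> x) *s a"
  by (simp add: vec_eq_iff matrix_vector_mult_def outer_def inner_vec_def sum_distrib_left algebra_simps)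

lemma inner_matrix_inv_bounds:
  fixes M :: "real^'n::finite^'n"
  assumes "\<And>x. x \<bullet> x \<le> x \<bullet> (M *v x)"
  shows "0 \<le> c \<bullet> (matrix_inv M *v c)" and "c \<bullet> (matrix_inv M *v c) \<le> c \<bullet> c"
proof -
  define w where "w = matrix_inv M *v c"
  have "M *v w = c"
    unfolding w_def by (rule matrix_inv_mult_vec_right[OF invertible_if_ge_identity[OF assms]])
  then have ww: "w \<bullet> w \<le> c \<bullet> w" using assms[of w] by (simp add: inner_commute)
  then show nonneg: "0 \<le> c \<bullet> (matrix_inv M *v c)" unfolding w_def by (smt (verit) inner_ge_zero)
  have "(c \<bullet> w)\<^sup>2 \<le> (c \<bullet> c) * (w \<bullet> w)" by (rule Cauchy_Schwarz_ineq)
  also have "\<dots> \<le> (c \<bullet> c) * (c \<bullet> w)" using ww by (simp add: mult_left_mono)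
  finally have "(c \<bullet> w) * (c \<bullet> w) \<le> (c \<bullet> c) * (c \<bullet> w)" by (simp add: power2_eq_square)
  then show "c \<bullet> (matrix_inv M *v c) \<le> c \<bullet> c"
    using nonneg unfolding w_def[symmetric]
    by (cases "c \<bullet> w = 0") (simp_all add: mult_le_cancel_right)
qed

text \<open>Sherman--Morrison, read off on the quadratic form: the solution of \<open>(M + c c\<^sup>T) y = s\<close> is
\<open>y = z - t w\<close> with \<open>t = c \<bullet> y\<close>, and pairing with \<open>c\<close> determines \<open>t\<close>.\<close>

lemma sherman_morrison_quadratic_form:
  fixes M :: "real^'n::finite^'n"
  assumes sym: "transpose M = M" and ge_id: "\<And>x. x \<bullet> x \<le> x \<bullet> (M *v x)"
  shows "s \<bullet> (matrix_inv (M + outer c c) *v s)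
         = s \<bullet> (matrix_inv M *v s) - (c \<bullet> (matrix_inv M *v s))\<^sup>2 / (1 + c \<bullet> (matrix_inv M *v c))"
proof -
  define z where "z = matrix_inv M *v s"
  define w where "w = matrix_inv M *v c"
  have inv_M: "invertible M" using ge_id by (rule invertible_if_ge_identity)
  have Mz: "M *v z = s" and Mw: "M *v w = c"
    unfolding z_def w_def by (rule matrix_inv_mult_vec_right[OF inv_M])+
  have "x \<bullet> x \<le> x \<bullet> ((M + outer c c) *v x)" for x
    using ge_id[of x]
    by (simp add: matrix_vector_mult_add_rdistrib outer_mult_vec inner_add_right inner_commute
                  scalar_mult_eq_scaleR add_increasing2)
  then have inv_N: "invertible (M + outer c c)" by (rule invertible_if_ge_identity)
  define y where "y = matrix_inv (M + outer c c) *v s"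
  define t where "t = c \<bullet> y"
  have "M *v y + t *s c = s"
    using matrix_inv_mult_vec_right[OF inv_N, of s]
    by (simp add: y_def t_def matrix_vector_mult_add_rdistrib outer_mult_vec)
  then have "M *v (y - z + t *s w) = M *v 0"
    using Mz Mw by (simp add: matrix_vector_mult_diff_distrib matrix_vector_right_distrib
                              scalar_mult_eq_scaleR matrix_vector_mult_scaleR algebra_simps)
  then have "y - z + t *s w = 0" by (rule injD[OF inj_matrix_vector_mult[OF inv_M]])
  then have y_eq: "y = z - t *s w" by (simp add: algebra_simps)
  have "t = c \<bullet> z - t * (c \<bullet> w)"
    using arg_cong[OF y_eq, of "inner c"] by (simp add: t_def inner_diff_right scalar_mult_eq_scaleR)
  then have t_eq: "t = (c \<bullet> z) / (1 + c \<bullet> w)"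
    using inner_matrix_inv_bounds(1)[OF ge_id, of c] by (simp add: w_def field_simps)
  have "s \<bullet> w = c \<bullet> z"
    using inner_symmetric_matrix[OF sym, of z w] Mz Mw by (simp add: inner_commute)
  then have "s \<bullet> y = s \<bullet> z - t * (c \<bullet> z)"
    using arg_cong[OF y_eq, of "inner s"] by (simp add: inner_diff_right scalar_mult_eq_scaleR)
  then show ?thesis using t_eq by (simp add: y_def z_def w_def power2_eq_square)
qed

lemma inner_chi_vec:
  assumes "u \<noteq> v"
  shows "chi_vec u v \<bullet> x = x $ u - x $ v"
proof -
  have "chi_vec u v \<bullet> x = (\<Sum>i\<in>UNIV. (if i = u then x $ u else 0) + (if i = v then - x $ v else 0))"
    unfolding inner_vec_def chi_vec_def using assms by (intro sum.cong) auto
  then show ?thesis by (simp add: sum.distrib)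
qed

lemma inner_chi_vec_self:
  assumes "u \<noteq> v"
  shows "chi_vec u v \<bullet> chi_vec u v = 2"
  using inner_chi_vec[OF assms] assms by (simp add: chi_vec_def)

theorem mainTheorem4:
  fixes A :: "'n::finite \<Rightarrow> 'n \<Rightarrow> bool" and s :: "real^'n" and u v :: 'n
  assumes "undirected_graph A"
    and "(\<Sum>i\<in>UNIV. s $ i) = 0"
    and "u \<noteq> v" and "\<not> A u v"
  defines "L \<equiv> graph_laplacian A"
    and "z \<equiv> fj_opinions (graph_laplacian A) s"
    and "E \<equiv> edge_laplacian u v"
    and "\<delta> \<equiv> fj_opinions (graph_laplacian A) s $ u - fj_opinions (graph_laplacian A) s $ v"
  shows "PD s L - \<delta>\<^sup>2 \<le> PD s (L + E) \<and> PD s (L + E) \<le> PD s L - \<delta>\<^sup>2 / 3"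
proof -
  define M where "M = mat 1 + L"
  define c where "c = chi_vec u v"
  define q where "q = c \<bullet> (matrix_inv M *v c)"
  have sym: "transpose M = M"
    using transpose_graph_laplacian[OF assms(1)]
    by (simp add: M_def L_def vec_eq_iff transpose_def mat_def)
  have ge_id: "x \<bullet> x \<le> x \<bullet> (M *v x)" for x
    using graph_laplacian_psd[OF assms(1), of x]
    by (simp add: M_def L_def matrix_vector_mult_add_rdistrib inner_add_right)
  have "c \<bullet> (matrix_inv M *v s) = \<delta>"
    by (simp add: c_def inner_chi_vec[OF assms(3)] \<delta>_def fj_opinions_def M_def L_def)
  then have PD_eq: "PD s (L + E) = PD s L - \<delta>\<^sup>2 / (1 + q)"
    using sherman_morrison_quadratic_form[OF sym ge_id, of s c]
    by (simp add: PD_def M_def E_def edge_laplacian_def c_def q_def add.assoc)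
  have q_bounds: "0 \<le> q" "q \<le> 2"
    using inner_matrix_inv_bounds[OF ge_id, of c] inner_chi_vec_self[OF assms(3)]
    by (simp_all add: q_def c_def)
  have "\<delta>\<^sup>2 / (1 + q) \<le> \<delta>\<^sup>2 / 1" and "\<delta>\<^sup>2 / 3 \<le> \<delta>\<^sup>2 / (1 + q)"
    by (rule divide_left_mono; use q_bounds in simp)+
  then show ?thesis using PD_eq by linarith
qed

end
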